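(* Let $(X,\leqslant)$ be a finite partially ordered set with a maximum element, $U$ a finite set of users and $\lambda\colon U\to X$. Then among the spanning out-trees of $H^*=(X,E_0^* )$ that have minimum weight with respect to $\omega$, there exists one, $T=(X,E)$, with $E\subseteq E_0$.
   Context: $E_0=\{xy: x,y\in X,\ y\lessdot x\}$ is the arc set of the Hasse diagram, where $y\lessdot x$ means $y<x$ and there is no $z$ with $y<z<x$. $E_0^*=\{xy:x,y\in X,\ x>y\}$. A spanning out-tree of $H^*$ is a subgraph with vertex set $X$ that is a rooted tree with arcs oriented away from the root; its weight is the sum of its arc weights. $U(x)=\{u\in U:\lambda(u)=x\}$; for $yz\in E_0^*$, $\gamma(yz)=\{x\in X:x\geqslant z,\ x\not\geqslant y\}$ and $\omega(yz)=\sum_{x\in\gamma(yz)}|U(x)|$. *)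

theory Defs
  imports Main
begin

text \<open>The poset (X, \<le>) is a finite set X of elements of a type with a partial order.
  Arcs are pairs (x, y), meaning the arc from x to y.\<close>

definition covers :: "'a::order set \<Rightarrow> 'a \<Rightarrow> 'a \<Rightarrow> bool" where
  "covers X y x \<longleftrightarrow> y < x \<and> \<not> (\<exists>z\<in>X. y < z \<and> z < x)"

definition E0 :: "'a::order set \<Rightarrow> ('a \<times> 'a) set" where
  "E0 X = {(x, y). x \<in> X \<and> y \<in> X \<and> covers X y x}"

definition E0star :: "'a::order set \<Rightarrow> ('a \<times> 'a) set" where
  "E0star X = {(x, y). x \<in> X \<and> y \<in> X \<and> x > y}"

definition users_at :: "'u set \<Rightarrow> ('u \<Rightarrow> 'a) \<Rightarrow> 'a \<Rightarrow> 'u set" where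
  "users_at U lam x = {u \<in> U. lam u = x}"

definition gamma :: "'a::order set \<Rightarrow> 'a \<times> 'a \<Rightarrow> 'a set" where
  "gamma X e = (case e of (y, z) \<Rightarrow> {x \<in> X. x \<ge> z \<and> \<not> x \<ge> y})"

definition omega :: "'a::order set \<Rightarrow> 'u set \<Rightarrow> ('u \<Rightarrow> 'a) \<Rightarrow> 'a \<times> 'a \<Rightarrow> nat" where
  "omega X U lam e = (\<Sum>x\<in>gamma X e. card (users_at U lam x))"

definition out_tree :: "'a set \<Rightarrow> ('a \<times> 'a) set \<Rightarrow> 'a \<Rightarrow> bool" where
  "out_tree V E r \<longleftrightarrow> E \<subseteq> V \<times> V \<and> r \<in> V \<and>
     {u. (u, r) \<in> E} = {} \<and>
     (\<forall>v\<in>V. v \<noteq> r \<longrightarrow> card {u. (u, v) \<in> E} = 1) \<and>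
     (\<forall>v\<in>V. (r, v) \<in> E\<^sup>*)"

definition spanning_out_tree :: "'a set \<Rightarrow> ('a \<times> 'a) set \<Rightarrow> ('a \<times> 'a) set \<Rightarrow> bool" where
  "spanning_out_tree V A E \<longleftrightarrow> E \<subseteq> A \<and> (\<exists>r. out_tree V E r)"

definition tree_weight :: "('a \<times> 'a \<Rightarrow> nat) \<Rightarrow> ('a \<times> 'a) set \<Rightarrow> nat" where
  "tree_weight w E = (\<Sum>e\<in>E. w e)"

end

theory Submission
  imports Defs
begin

text \<open>In an out-tree every vertex other than the root has exactly one parent, so the tree is
  the set of arcs from a parent function and its weight is a sum over non-root vertices.
  A minimum spanning out-tree may therefore pick, independently for each vertex, a cheapest
  incoming arc. In \<open>H\<^sup>*\<close> the root must be the maximum, the candidate parents of \<open>v\<close> are the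
  elements above \<open>v\<close>, and \<open>\<omega>(u, v)\<close> grows with \<open>u\<close>; hence some element covering \<open>v\<close> is a
  cheapest parent, and the resulting tree lies in the Hasse diagram.\<close>

lemma out_tree_parent_image:
  assumes "out_tree V E r"
  obtains q where "E = (\<lambda>v. (q v, v)) ` (V - {r})"
proof
  define q where "q v = (THE u. (u, v) \<in> E)" for v
  have parent: "{u. (u, v) \<in> E} = {q v}" if "v \<in> V - {r}" for v
  proof -
    have "card {u. (u, v) \<in> E} = 1" using assms that by (auto simp: out_tree_def)
    then obtain a where a: "{u. (u, v) \<in> E} = {a}" by (rule card_1_singletonE)
    hence "q v = a" unfolding q_def by (metis mem_Collect_eq singletonD singletonI the_equality)
    thus ?thesis using a by simp
  qed
  show "E = (\<lambda>v. (q v, v)) ` (V - {r})"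
  proof
    show "E \<subseteq> (\<lambda>v. (q v, v)) ` (V - {r})"
    proof
      fix e assume e: "e \<in> E"
      then obtain a b where ab: "e = (a, b)" "b \<in> V - {r}"
        using assms by (cases e) (auto simp: out_tree_def)
      with parent[OF ab(2)] e show "e \<in> (\<lambda>v. (q v, v)) ` (V - {r})" by auto
    qed
    show "(\<lambda>v. (q v, v)) ` (V - {r}) \<subseteq> E" using parent by auto
  qed
qed

lemma tree_weight_parent_image:
  "tree_weight w ((\<lambda>v. (p v, v)) ` S) = (\<Sum>v\<in>S. w (p v, v))"
  unfolding tree_weight_def by (subst sum.reindex) (auto simp: inj_on_def)

text \<open>Parents are strictly larger, so following parents climbs a finite order and must end
  at the only parentless vertex \<open>r\<close>.\<close>

lemma out_tree_of_increasing_parent: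
  fixes V :: "'a::order set"
  assumes "finite V" "r \<in> V" and parent: "\<And>v. v \<in> V - {r} \<Longrightarrow> p v \<in> V \<and> v < p v"
  shows "out_tree V ((\<lambda>v. (p v, v)) ` (V - {r})) r"
proof -
  let ?E = "(\<lambda>v. (p v, v)) ` (V - {r})"
  have reach: "(r, v) \<in> ?E\<^sup>*" if "v \<in> V" for v
    using that
  proof (induction "card {x\<in>V. v < x}" arbitrary: v rule: less_induct)
    case less
    show ?case
    proof (cases "v = r")
      case False
      hence v: "v \<in> V - {r}" using less.prems by simp
      have "{x\<in>V. p v < x} \<subset> {x\<in>V. v < x}"
        using parent[OF v] by (auto intro: less_trans)
      hence "card {x\<in>V. p v < x} < card {x\<in>V. v < x}"
        using assms(1) by (intro psubset_card_mono) auto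
      hence "(r, p v) \<in> ?E\<^sup>*" using less.hyps parent[OF v] by blast
      moreover have "(p v, v) \<in> ?E" using v by auto
      ultimately show ?thesis by auto
    qed simp
  qed
  have "{u. (u, v) \<in> ?E} = {p v}" if "v \<in> V - {r}" for v using that by auto
  thus ?thesis unfolding out_tree_def using assms reach by auto
qed

lemma sum_cheapest_parents_le_tree_weight:
  assumes "out_tree V E r" "E \<subseteq> A"
    and cheapest: "\<And>u v. v \<in> V - {r} \<Longrightarrow> (u, v) \<in> A \<Longrightarrow> w (p v, v) \<le> w (u, v)"
  shows "(\<Sum>v\<in>V - {r}. w (p v, v)) \<le> tree_weight w E"
proof -
  obtain q where E: "E = (\<lambda>v. (q v, v)) ` (V - {r})"
    using out_tree_parent_image[OF assms(1)] .
  have "(\<Sum>v\<in>V - {r}. w (p v, v)) \<le> (\<Sum>v\<in>V - {r}. w (q v, v))"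
    using cheapest assms(2) E by (intro sum_mono) auto
  thus ?thesis using E by (simp add: tree_weight_parent_image)
qed

lemma out_tree_root_eq_maximum:
  assumes "out_tree X E r" "E \<subseteq> E0star X" "m \<in> X" "\<forall>x\<in>X. x \<le> m"
  shows "r = m"
proof (rule ccontr)
  assume "r \<noteq> m"
  hence "card {u. (u, m) \<in> E} = 1" using assms(1,3) by (auto simp: out_tree_def)
  then obtain a where "{u. (u, m) \<in> E} = {a}" by (rule card_1_singletonE)
  hence "a \<in> X" "m < a" using assms(2) by (auto simp: E0star_def)
  thus False using assms(4) by (auto simp: less_le_not_le)
qed

lemma omega_mono_head:
  assumes "finite X" "c \<le> u"
  shows "omega X U lam (c, v) \<le> omega X U lam (u, v)"
proof -
  have "gamma X (c, v) \<subseteq> gamma X (u, v)"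
    using assms(2) by (auto simp: gamma_def intro: order_trans)
  moreover have "finite (gamma X (u, v))" using assms(1) by (simp add: gamma_def)
  ultimately show ?thesis unfolding omega_def by (intro sum_mono2) auto
qed

lemma exists_cover_below:
  assumes "finite X" "u \<in> X" "v < u"
  obtains c where "c \<in> X" "covers X v c" "c \<le> u"
proof -
  obtain c where c: "c \<in> X" "v < c" "c \<le> u" "\<forall>z\<in>{x\<in>X. v < x}. z \<le> c \<longrightarrow> c = z"
    using finite_has_minimal2[of "{x\<in>X. v < x}" u] assms by auto
  have "covers X v c" unfolding covers_def using c by (fastforce simp: less_le)
  with c show ?thesis using that by blast
qed

lemma exists_cheapest_cover:
  assumes "finite X" "u0 \<in> X" "v < u0"
  obtains c where "c \<in> X" "covers X v c"
    "\<And>u. u \<in> X \<Longrightarrow> v < u \<Longrightarrow> omega X U lam (c, v) \<le> omega X U lam (u, v)"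
proof -
  let ?C = "{c\<in>X. covers X v c}"
  let ?f = "\<lambda>c. omega X U lam (c, v)"
  have "finite ?C" using assms(1) by auto
  moreover have "?C \<noteq> {}" using exists_cover_below[OF assms] by blast
  ultimately have "Min (?f ` ?C) \<in> ?f ` ?C" by (intro Min_in) auto
  then obtain c where c: "c \<in> ?C" "?f c = Min (?f ` ?C)" by auto
  have cheapest: "?f c \<le> ?f u" if u: "u \<in> X" "v < u" for u
  proof -
    obtain c' where c': "c' \<in> X" "covers X v c'" "c' \<le> u"
      using exists_cover_below[OF assms(1) u] .
    have "?f c \<le> ?f c'" using c c' \<open>finite ?C\<close> by simp
    also have "\<dots> \<le> ?f u" using omega_mono_head[OF assms(1) c'(3)] .
    finally show ?thesis .
  qed
  from c(1) have "c \<in> X" "covers X v c" by auto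
  then show ?thesis using cheapest by (rule that)
qed

theorem corollary4:
  fixes X :: "'a::order set" and U :: "'u set" and lam :: "'u \<Rightarrow> 'a"
  assumes "finite X"
    and "\<exists>m\<in>X. \<forall>x\<in>X. x \<le> m"
    and "finite U"
    and "\<forall>u\<in>U. lam u \<in> X"
  shows "\<exists>E. spanning_out_tree X (E0star X) E
            \<and> (\<forall>E'. spanning_out_tree X (E0star X) E' \<longrightarrow>
                   tree_weight (omega X U lam) E \<le> tree_weight (omega X U lam) E')
            \<and> E \<subseteq> E0 X"
proof -
  obtain m where m: "m \<in> X" "\<forall>x\<in>X. x \<le> m" using assms(2) by blast
  let ?w = "omega X U lam"
  have "\<exists>c. c \<in> X \<and> covers X v c \<and> (\<forall>u. (u, v) \<in> E0star X \<longrightarrow> ?w (c, v) \<le> ?w (u, v))"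
    if "v \<in> X - {m}" for v
  proof -
    have "v < m" using that m by (auto simp: less_le)
    then obtain c where "c \<in> X" "covers X v c"
      "\<And>u. u \<in> X \<Longrightarrow> v < u \<Longrightarrow> ?w (c, v) \<le> ?w (u, v)"
      using exists_cheapest_cover[OF assms(1) m(1)] by blast
    then show ?thesis by (auto simp: E0star_def)
  qed
  then obtain p where p: "\<And>v. v \<in> X - {m} \<Longrightarrow> p v \<in> X \<and> covers X v (p v) \<and>
      (\<forall>u. (u, v) \<in> E0star X \<longrightarrow> ?w (p v, v) \<le> ?w (u, v))"
    by metis
  define E where "E = (\<lambda>v. (p v, v)) ` (X - {m})"
  have "E \<subseteq> E0 X" using p by (auto simp: E_def E0_def)
  moreover have "spanning_out_tree X (E0star X) E"
    using \<open>E \<subseteq> E0 X\<close> out_tree_of_increasing_parent[OF assms(1) m(1), of p] p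
    unfolding spanning_out_tree_def E_def by (auto simp: E0_def E0star_def covers_def)
  moreover have "tree_weight ?w E \<le> tree_weight ?w E'"
    if E': "spanning_out_tree X (E0star X) E'" for E'
  proof -
    obtain r where r: "out_tree X E' r" "E' \<subseteq> E0star X"
      using E' unfolding spanning_out_tree_def by blast
    with out_tree_root_eq_maximum[OF r m] have "out_tree X E' m" by simp
    from sum_cheapest_parents_le_tree_weight[OF this r(2)] p
    show ?thesis by (simp add: E_def tree_weight_parent_image)
  qed
  ultimately show ?thesis by blast
qed

end
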